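(* Let $G=(V,E)$ be a task-assistance graph and $\pi=\langle v_0,\dots,v_k\rangle$ ($k\ge1$) a path in $G$, and let $N_{\mathcal{I}}^{\pi}:=\sum_{i=0}^{k}|\mathcal{I}(v_i)|$ be the total number of intervals of the vertices of $\pi$. Then the set of vertex-critical times $C_0$ of $\pi$ can be computed in $O(k+N_{\mathcal{I}}^{\pi})$ time.
   Context: A task-assistance graph is a directed graph $G=(V,E)$ in which every edge $e$ has a length $\ell(e)\ge 0$ and every vertex $v$ has a finite set $\mathcal{I}(v)$ of closed intervals contained in $[0,1]$. A path is $\pi=\langle v_0,\dots,v_k\rangle$ with $(v_i,v_{i+1})\in E$; vertices may repeat, and all quantities below are attached to positions $i$ in the path. Set $\ell(v_{-1},v_0):=0$, $\ell(v_k,v_{k+1}):=0$, $\ell(v_i):=\sum_{j=0}^{i-1}\ell(v_j,v_{j+1})$, $\ell^+(v_i):=\ell(v_i)+\tfrac12\ell(v_i,v_{i+1})$, $\ell^-(v_i):=\ell(v_i)-\tfrac12\ell(v_{i-1},v_i)$, and $\ell^+(v_i,v_j):=\ell^+(v_j)-\ell^+(v_i)$. Augmented interval sets per position: $J_i:=\mathcal{I}(v_i)$ for $0<i<k$, $J_0:=\mathcal{I}(v_0)\cup\{[\ell^+(v_0),\ell^+(v_0)]\}$, $J_k:=\mathcal{I}(v_k)\cup\{[1-\ell^+(v_{k-1},v_k),\,1-\ell^+(v_{k-1},v_k)]\}$. For positions $0\le a<b\le k$ the vertex-pair critical times are $C(a,b):=\{t_e:[t_s,t_e]\in J_a\}\cup\{t_s-(\ell^-(v_b)-\ell^+(v_a)):[t_s,t_e]\in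 J_b\}$, and the vertex-critical times of position $i$ are $C_i:=\bigcup_{0\le a<b\le k}\{\tau+\ell^+(v_a,v_i):\tau\in C(a,b)\}$. *)

theory Defs
  imports Complex_Main "HOL-Library.Time_Functions"
begin

text \<open>A closed interval [t_s, t_e] is represented by its endpoint pair (t_s, t_e).
  The graph has vertex type 'v, edge set E, edge length function len, and
  interval assignment I.\<close>

definition task_assistance_graph ::
  "('v \<times> 'v) set \<Rightarrow> ('v \<Rightarrow> 'v \<Rightarrow> real) \<Rightarrow> ('v \<Rightarrow> (real \<times> real) set) \<Rightarrow> bool" where
  "task_assistance_graph E len I \<longleftrightarrow>
     (\<forall>u v. (u, v) \<in> E \<longrightarrow> len u v \<ge> 0) \<and>
     (\<forall>v. finite (I v) \<and> (\<forall>(s, e) \<in> I v. 0 \<le> s \<and> s \<le> e \<and> e \<le> 1))"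

definition is_path :: "('v \<times> 'v) set \<Rightarrow> 'v list \<Rightarrow> bool" where
  "is_path E vs \<longleftrightarrow> vs \<noteq> [] \<and> (\<forall>i. i + 1 < length vs \<longrightarrow> (vs ! i, vs ! (i + 1)) \<in> E)"

text \<open>Edge length l(v_i, v_{i+1}) at position i, with l(v_k, v_{k+1}) := 0.\<close>
definition elen :: "('v \<Rightarrow> 'v \<Rightarrow> real) \<Rightarrow> 'v list \<Rightarrow> nat \<Rightarrow> real" where
  "elen len vs i = (if i + 1 < length vs then len (vs ! i) (vs ! (i + 1)) else 0)"

definition lpos :: "('v \<Rightarrow> 'v \<Rightarrow> real) \<Rightarrow> 'v list \<Rightarrow> nat \<Rightarrow> real" where
  "lpos len vs i = (\<Sum>j<i. elen len vs j)"

definition lplus :: "('v \<Rightarrow> 'v \<Rightarrow> real) \<Rightarrow> 'v list \<Rightarrow> nat \<Rightarrow> real" where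
  "lplus len vs i = lpos len vs i + elen len vs i / 2"

text \<open>l^-(v_i), with l(v_{-1}, v_0) := 0\<close>
definition lminus :: "('v \<Rightarrow> 'v \<Rightarrow> real) \<Rightarrow> 'v list \<Rightarrow> nat \<Rightarrow> real" where
  "lminus len vs i = lpos len vs i - (if i = 0 then 0 else elen len vs (i - 1)) / 2"

definition Jset :: "('v \<Rightarrow> 'v \<Rightarrow> real) \<Rightarrow> ('v \<Rightarrow> (real \<times> real) set) \<Rightarrow> 'v list \<Rightarrow> nat \<Rightarrow> (real \<times> real) set" where
  "Jset len I vs i =
     (let k = length vs - 1 in
      I (vs ! i)
      \<union> (if i = 0 then {(lplus len vs 0, lplus len vs 0)} else {})
      \<union> (if i = k then {(1 - (lplus len vs k - lplus len vs (k - 1)),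
                          1 - (lplus len vs k - lplus len vs (k - 1)))} else {}))"

definition Cpair :: "('v \<Rightarrow> 'v \<Rightarrow> real) \<Rightarrow> ('v \<Rightarrow> (real \<times> real) set) \<Rightarrow> 'v list \<Rightarrow> nat \<Rightarrow> nat \<Rightarrow> real set" where
  "Cpair len I vs a b =
     {te. \<exists>ts. (ts, te) \<in> Jset len I vs a}
     \<union> {ts - (lminus len vs b - lplus len vs a) | ts te. (ts, te) \<in> Jset len I vs b}"

definition Cvert :: "('v \<Rightarrow> 'v \<Rightarrow> real) \<Rightarrow> ('v \<Rightarrow> (real \<times> real) set) \<Rightarrow> 'v list \<Rightarrow> nat \<Rightarrow> real set" where
  "Cvert len I vs i =
     (\<Union>a. \<Union>b. if a < b \<and> b \<le> length vs - 1
        then (\<lambda>\<tau>. \<tau> + (lplus len vs i - lplus len vs a)) ` Cpair len I vs a b else {})"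

text \<open>Input: one entry per position i = 0..k, namely (list of intervals of v_i, l(v_i,v_{i+1})).\<close>

fun ends :: "real \<Rightarrow> (real \<times> real) list \<Rightarrow> real list" where
  "ends c [] = []"
| "ends c ((s, e) # xs) = (e + c) # ends c xs"

fun starts :: "real \<Rightarrow> (real \<times> real) list \<Rightarrow> real list" where
  "starts c [] = []"
| "starts c ((s, e) # xs) = (s + c) # starts c xs"

text \<open>go p0 L dprev rest processes positions i >= 1, where L = l(v_i), dprev = l(v_{i-1},v_i).\<close>
fun go :: "real \<Rightarrow> real \<Rightarrow> real \<Rightarrow> ((real \<times> real) list \<times> real) list \<Rightarrow> real list" where
  "go p0 L dprev [] = []"
| "go p0 L dprev [(I, d)] =
     starts (p0 - (L - dprev / 2)) ((1 - dprev / 2, 1 - dprev / 2) # I)"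
| "go p0 L dprev ((I, d) # x # rest) =
     ends (p0 - (L + d / 2)) I @ starts (p0 - (L - dprev / 2)) I @ go p0 (L + d) d (x # rest)"

fun crit0 :: "((real \<times> real) list \<times> real) list \<Rightarrow> real list" where
  "crit0 [] = []"
| "crit0 ((I, d) # rest) = ends 0 ((d / 2, d / 2) # I) @ go (d / 2) d d rest"

text \<open>Step-counting functions, written by hand following the conventions of the
  time_fun command of HOL-Library (each call of a defined function costs 1 plus the
  costs of the defined functions it calls; list append xs @ ys costs T_append xs ys
  = length xs + 1; arithmetic and constructors are free).\<close>

fun T_ends :: "real \<Rightarrow> (real \<times> real) list \<Rightarrow> nat" where
  "T_ends c [] = 1"
| "T_ends c ((s, e) # xs) = T_ends c xs + 1"

fun T_starts :: "real \<Rightarrow> (real \<times> real) list \<Rightarrow> nat" where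
  "T_starts c [] = 1"
| "T_starts c ((s, e) # xs) = T_starts c xs + 1"

fun T_go :: "real \<Rightarrow> real \<Rightarrow> real \<Rightarrow> ((real \<times> real) list \<times> real) list \<Rightarrow> nat" where
  "T_go p0 L dprev [] = 1"
| "T_go p0 L dprev [(I, d)] =
     T_starts (p0 - (L - dprev / 2)) ((1 - dprev / 2, 1 - dprev / 2) # I) + 1"
| "T_go p0 L dprev ((I, d) # x # rest) =
     T_ends (p0 - (L + d / 2)) I + T_starts (p0 - (L - dprev / 2)) I
     + T_go p0 (L + d) d (x # rest)
     + T_append (starts (p0 - (L - dprev / 2)) I) (go p0 (L + d) d (x # rest))
     + T_append (ends (p0 - (L + d / 2)) I)
                (starts (p0 - (L - dprev / 2)) I @ go p0 (L + d) d (x # rest)) + 1"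

fun T_crit0 :: "((real \<times> real) list \<times> real) list \<Rightarrow> nat" where
  "T_crit0 [] = 1"
| "T_crit0 ((I, d) # rest) =
     T_ends 0 ((d / 2, d / 2) # I) + T_go (d / 2) d d rest
     + T_append (ends 0 ((d / 2, d / 2) # I)) (go (d / 2) d d rest) + 1"

end

theory Submission
  imports Defs
begin

text \<open>Shifted to position 0, the contribution of C(a,b) to C_0 splits into the end times of
  J_a shifted by l^+(v_0) - l^+(v_a), which depend on a only, and the start times of J_b
  shifted by l^+(v_0) - l^-(v_b), which depend on b only. Since b = k and a = 0 are always
  admissible partners, C_0 is the union of the former over a < k and the latter over
  1 \<le> b \<le> k. This set has O(k + N) elements and is enumerated by one left-to-right pass
  over the path that maintains l(v_i) incrementally.\<close>

lemma set_ends: "set (ends c xs) = (\<lambda>p. snd p + c) ` set xs"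
  by (induction c xs rule: ends.induct) auto

lemma set_starts: "set (starts c xs) = (\<lambda>p. fst p + c) ` set xs"
  by (induction c xs rule: starts.induct) auto

lemma length_ends: "length (ends c xs) = length xs"
  by (induction c xs rule: ends.induct) auto

lemma length_starts: "length (starts c xs) = length xs"
  by (induction c xs rule: starts.induct) auto

lemma T_ends_eq: "T_ends c xs = length xs + 1"
  by (induction c xs rule: T_ends.induct) auto

lemma T_starts_eq: "T_starts c xs = length xs + 1"
  by (induction c xs rule: T_starts.induct) auto

lemma T_go_le: "T_go p0 L dprev xs \<le> 5 * length xs + 4 * sum_list (map (length \<circ> fst) xs) + 1"
  by (induction p0 L dprev xs rule: T_go.induct)
     (auto simp: T_ends_eq T_starts_eq T_append length_ends length_starts)

lemma T_crit0_le: "T_crit0 xs \<le> 5 * length xs + 4 * sum_list (map (length \<circ> fst) xs) + 1"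
proof (cases xs)
  case (Cons x rest)
  then show ?thesis
    using T_go_le[of "snd x / 2" "snd x" "snd x" rest]
    by (cases x) (auto simp: T_ends_eq T_append length_ends)
qed simp

lemma Cvert_decoupled:
  assumes "2 \<le> length vs"
  shows "Cvert len I vs i =
    (\<Union>a<length vs - 1. (\<lambda>p. snd p + (lplus len vs i - lplus len vs a)) ` Jset len I vs a) \<union>
    (\<Union>b\<in>{1..length vs - 1}. (\<lambda>p. fst p + (lplus len vs i - lminus len vs b)) ` Jset len I vs b)"
proof -
  let ?E = "\<lambda>a. (\<lambda>p. snd p + (lplus len vs i - lplus len vs a)) ` Jset len I vs a"
  let ?S = "\<lambda>b. (\<lambda>p. fst p + (lplus len vs i - lminus len vs b)) ` Jset len I vs b"
  have pair: "(\<lambda>\<tau>. \<tau> + (lplus len vs i - lplus len vs a)) ` Cpair len I vs a b = ?E a \<union> ?S b" for a b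
    unfolding Cpair_def by (auto simp: image_iff) force+
  let ?k = "length vs - 1"
  have "Cvert len I vs i = (\<Union>a. \<Union>b. if a < b \<and> b \<le> ?k then ?E a \<union> ?S b else {})"
    unfolding Cvert_def pair ..
  also have "\<dots> = (\<Union>a<?k. ?E a) \<union> (\<Union>b\<in>{1..?k}. ?S b)"
  proof (intro equalityI subsetI)
    fix x
    assume "x \<in> (\<Union>a. \<Union>b. if a < b \<and> b \<le> ?k then ?E a \<union> ?S b else {})"
    then obtain a b where "a < b" "b \<le> ?k" "x \<in> ?E a \<union> ?S b"
      by (auto split: if_splits)
    then show "x \<in> (\<Union>a<?k. ?E a) \<union> (\<Union>b\<in>{1..?k}. ?S b)" by auto
  next
    fix x
    assume "x \<in> (\<Union>a<?k. ?E a) \<union> (\<Union>b\<in>{1..?k}. ?S b)"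
    then consider a where "a < ?k" "x \<in> ?E a" | b where "1 \<le> b" "b \<le> ?k" "x \<in> ?S b"
      by (elim UnE UN_E) auto
    then show "x \<in> (\<Union>a. \<Union>b. if a < b \<and> b \<le> ?k then ?E a \<union> ?S b else {})"
    proof cases
      case 1
      then show ?thesis by (intro UN_I[of a] UN_I[of ?k]) auto
    next
      case 2
      then show ?thesis by (intro UN_I[of 0] UN_I[of b]) auto
    qed
  qed
  finally show ?thesis .
qed

lemma Jset_first:
  assumes "2 \<le> length vs"
  shows "Jset len I vs 0 = insert (lplus len vs 0, lplus len vs 0) (I (vs ! 0))"
  using assms by (cases vs) (auto simp: Jset_def Let_def)

lemma Jset_inner:
  assumes "0 < i" "i < length vs - 1"
  shows "Jset len I vs i = I (vs ! i)"
  using assms by (auto simp: Jset_def Let_def)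

lemma lplus_last_diff:
  assumes "2 \<le> length vs"
  shows "lplus len vs (length vs - 1) - lplus len vs (length vs - 2) = elen len vs (length vs - 2) / 2"
proof -
  obtain m where m: "length vs = Suc (Suc m)"
    using assms by (metis add_2_eq_Suc le_Suc_ex)
  then show ?thesis
    by (simp add: lplus_def lpos_def elen_def)
qed

lemma Jset_last:
  assumes "2 \<le> length vs"
  shows "Jset len I vs (length vs - 1) =
    insert (1 - elen len vs (length vs - 2) / 2, 1 - elen len vs (length vs - 2) / 2)
      (I (vs ! (length vs - 1)))"
  using assms lplus_last_diff[OF assms, of len]
  by (auto simp: Jset_def Let_def numeral_2_eq_2)

lemma set_go:
  fixes len :: "'v \<Rightarrow> 'v \<Rightarrow> real"
  assumes "1 \<le> j" "j < length vs"
  shows "set (go p0 (lpos len vs j) (elen len vs (j - 1))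
            (map (\<lambda>i. (Il (vs ! i), elen len vs i)) [j..<length vs])) =
    (\<Union>a\<in>{j..<length vs - 1}. (\<lambda>p. snd p + (p0 - lplus len vs a)) ` Jset len (\<lambda>v. set (Il v)) vs a) \<union>
    (\<Union>b\<in>{j..length vs - 1}. (\<lambda>p. fst p + (p0 - lminus len vs b)) ` Jset len (\<lambda>v. set (Il v)) vs b)"
proof -
  have "j \<le> length vs - 1"
    using assms by simp
  then show ?thesis
    using assms(1)
  proof (induction j rule: inc_induct)
    case base
    let ?k = "length vs - 1"
    have "[?k..<length vs] = [?k]" and "elen len vs ?k = 0" and "?k - 1 = length vs - 2"
      using base by (auto simp: elen_def upt_conv_Cons)
    then show ?case
      using base Jset_last[of vs len "\<lambda>v. set (Il v)"]
      by (auto simp: set_starts lminus_def algebra_simps)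
  next
    case (step j)
    let ?F = "\<lambda>i. (Il (vs ! i), elen len vs i)"
    have "[j..<length vs] = j # Suc j # [Suc (Suc j)..<length vs]"
      using step by (simp add: upt_rec)
    then have "go p0 (lpos len vs j) (elen len vs (j - 1)) (map ?F [j..<length vs]) =
        ends (p0 - lplus len vs j) (Il (vs ! j)) @ starts (p0 - lminus len vs j) (Il (vs ! j)) @
        go p0 (lpos len vs (Suc j)) (elen len vs (Suc j - 1)) (map ?F [Suc j..<length vs])"
      using step by (simp add: upt_rec lplus_def lminus_def lpos_def algebra_simps)
    moreover have "{j..<length vs - 1} = insert j {Suc j..<length vs - 1}"
      and "{j..length vs - 1} = insert j {Suc j..length vs - 1}"
      using step by auto
    ultimately show ?case
      using step Jset_inner[of j vs len "\<lambda>v. set (Il v)"]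
      by (simp add: set_ends set_starts Un_ac)
  qed
qed

lemma set_crit0:
  fixes len :: "'v \<Rightarrow> 'v \<Rightarrow> real"
  assumes "2 \<le> length vs"
  shows "set (crit0 (map (\<lambda>i. (Il (vs ! i), elen len vs i)) [0..<length vs])) =
    Cvert len (\<lambda>v. set (Il v)) vs 0"
proof -
  let ?F = "\<lambda>i. (Il (vs ! i), elen len vs i)" and ?J = "Jset len (\<lambda>v. set (Il v)) vs"
  let ?E = "\<lambda>a. (\<lambda>p. snd p + (lplus len vs 0 - lplus len vs a)) ` ?J a"
  let ?S = "\<lambda>b. (\<lambda>p. fst p + (lplus len vs 0 - lminus len vs b)) ` ?J b"
  have "[0..<length vs] = 0 # [1..<length vs]"
    using assms by (subst upt_conv_Cons) auto
  then have "set (crit0 (map ?F [0..<length vs])) = set (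
      ends 0 ((lplus len vs 0, lplus len vs 0) # Il (vs ! 0)) @
      go (lplus len vs 0) (lpos len vs 1) (elen len vs (1 - 1)) (map ?F [1..<length vs]))"
    by (simp add: lplus_def lpos_def)
  also have "\<dots> = ?E 0 \<union> ((\<Union>a\<in>{1..<length vs - 1}. ?E a) \<union> (\<Union>b\<in>{1..length vs - 1}. ?S b))"
    using assms set_go[of 1 vs "lplus len vs 0" len Il] by (simp add: set_ends Jset_first)
  also have "\<dots> = (\<Union>a<length vs - 1. ?E a) \<union> (\<Union>b\<in>{1..length vs - 1}. ?S b)"
  proof -
    have "{..<length vs - 1} = insert 0 {1..<length vs - 1}"
      using assms by auto
    then show ?thesis by auto
  qed
  finally show ?thesis
    using assms by (simp add: Cvert_decoupled)
qed

lemma T_crit0_path_le: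
  assumes "2 \<le> length vs"
  shows "T_crit0 (map (\<lambda>i. (Il (vs ! i), elen len vs i)) [0..<length vs])
    \<le> 11 * (length vs - 1 + (\<Sum>i\<le>length vs - 1. length (Il (vs ! i))))"
proof -
  let ?inp = "map (\<lambda>i. (Il (vs ! i), elen len vs i)) [0..<length vs]"
  let ?N = "\<Sum>i\<le>length vs - 1. length (Il (vs ! i))"
  have "{..length vs - 1} = {0..<length vs}"
    using assms by auto
  then have "sum_list (map (length \<circ> fst) ?inp) = ?N"
    by (simp add: o_def flip: sum_set_upt_conv_sum_list_nat)
  then have "T_crit0 ?inp \<le> 5 * length vs + 4 * ?N + 1"
    using T_crit0_le[of ?inp] by simp
  also have "\<dots> \<le> 11 * (length vs - 1 + ?N)"
    using assms by simp
  finally show ?thesis .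
qed

theorem lemma1:
  "\<exists>c::nat. \<forall>(E :: ('v \<times> 'v) set) len I Il vs.
     task_assistance_graph E len I \<longrightarrow> is_path E vs \<longrightarrow> length vs \<ge> 2 \<longrightarrow>
     (\<forall>v. set (Il v) = I v \<and> distinct (Il v)) \<longrightarrow>
     (let k = length vs - 1;
          N = (\<Sum>i\<le>k. card (I (vs ! i)));
          inp = map (\<lambda>i. (Il (vs ! i), elen len vs i)) [0..<length vs]
      in set (crit0 inp) = Cvert len I vs 0 \<and> T_crit0 inp \<le> c * (k + N))"
proof (intro exI[of _ 11] allI impI)
  fix E :: "('v \<times> 'v) set" and len I Il and vs :: "'v list"
  assume "task_assistance_graph E len I" "is_path E vs"
    and two: "length vs \<ge> 2" and Il: "\<forall>v. set (Il v) = I v \<and> distinct (Il v)"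
  have I: "I = (\<lambda>v. set (Il v))"
    using Il by auto
  have "card (I v) = length (Il v)" for v
    using Il distinct_card by metis
  then show "let k = length vs - 1; N = \<Sum>i\<le>k. card (I (vs ! i));
      inp = map (\<lambda>i. (Il (vs ! i), elen len vs i)) [0..<length vs]
    in set (crit0 inp) = Cvert len I vs 0 \<and> T_crit0 inp \<le> 11 * (k + N)"
    using set_crit0[OF two, of Il len] T_crit0_path_le[OF two, of Il len] by (simp add: I)
qed

end
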